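(* Let $q$ be a power of an odd prime, let $n$ be an even positive integer, and let $k$ be a divisor of $q-1$. Then $(q^n,k)$ does not give a $3$-design.
   Context: For a prime power $Q\equiv1\pmod 4$ (note $q^n\equiv 1\pmod 4$ here) the group $\mathrm{PSL}(2,Q)$ acts on $\mathrm{PG}(1,Q)=\mathbb{F}_Q\cup\{\infty\}$ by linear fractional transformations $z\mapsto (az+b)/(cz+d)$ with $ad-bc$ a nonzero square in $\mathbb{F}_Q$. For a divisor $k$ of $Q-1$, "$(Q,k)$ gives a $3$-design" means that the $\mathrm{PSL}(2,Q)$-orbit of the unique subgroup of order $k$ of $\mathbb{F}_Q^\times$ is the block set of a $3$-$(Q+1,k,\lambda)$ design for some positive integer $\lambda$. *)

theory Defs
  imports Main "HOL-Computational_Algebra.Primes"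
begin

text \<open>The projective line PG(1,F) over a field F is modelled as the type 'a option:
  Some z is the affine point z, None is the point at infinity.\<close>

definition lft :: "'a::field \<Rightarrow> 'a \<Rightarrow> 'a \<Rightarrow> 'a \<Rightarrow> 'a option \<Rightarrow> 'a option" where
  "lft a b c d z = (case z of
      None \<Rightarrow> (if c = 0 then None else Some (a / c))
    | Some x \<Rightarrow> (if c * x + d = 0 then None else Some ((a * x + b) / (c * x + d))))"

definition PSL2 :: "('a::field option \<Rightarrow> 'a option) set" where
  "PSL2 = {lft a b c d | a b c d. \<exists>s. s \<noteq> 0 \<and> a * d - b * c = s ^ 2}"

text \<open>The subgroup of order k of the multiplicative group (for k dividing |F|-1),
  viewed as a set of points of the projective line.\<close>
definition base_block :: "nat \<Rightarrow> 'a::field option set" where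
  "base_block k = Some ` {x. x ^ k = 1}"

definition design_blocks :: "nat \<Rightarrow> 'a::field option set set" where
  "design_blocks k = (\<lambda>g. g ` base_block k) ` PSL2"

definition gives_3_design :: "'a::{finite,field} itself \<Rightarrow> nat \<Rightarrow> bool" where
  "gives_3_design _ k \<longleftrightarrow>
     (\<exists>lam::nat. lam > 0 \<and>
        (\<forall>T :: 'a option set. card T = 3 \<longrightarrow>
            card {B \<in> (design_blocks k :: 'a option set set). T \<subseteq> B} = lam))"

end

theory Submission
  imports Defs "HOL-Number_Theory.Number_Theory" "HOL-Computational_Algebra.Polynomial"
  "HOL-Library.Cardinality"
begin

text \<open>Let \<open>Q = q\<^sup>n\<close>, \<open>e = (Q - 1)/2\<close> and \<open>\<chi>(x) = x\<^sup>e\<close>, the quadratic character of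
  \<open>F\<^sub>Q\<close>. As \<open>n\<close> is even, \<open>2(q - 1)\<close> divides \<open>Q - 1\<close>, so \<open>\<chi>\<close> is trivial on
  \<open>F\<^sub>q\<^sup>\<times>\<close>; the base block lies in \<open>F\<^sub>q\<close>, hence \<open>\<chi> = 1\<close> on all differences of its points.
  If \<open>z \<mapsto> (az + b)/(cz + d)\<close> sends points \<open>x\<^sub>1, x\<^sub>2, x\<^sub>3\<close> of the base block to
  \<open>\<infinity>, 0, \<nu>\<close>, then \<open>\<nu> c\<^sup>2 (x\<^sub>2 - x\<^sub>1)(x\<^sub>3 - x\<^sub>1) = (ad - bc)(x\<^sub>3 - x\<^sub>2)\<close> with \<open>ad - bc\<close> a
  square, so \<open>\<chi>(\<nu>) = 1\<close>. Hence for a nonsquare \<open>\<nu>\<close> no block contains the triple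
  \<open>{\<infinity>, 0, \<nu>}\<close>, which forces \<open>\<lambda> = 0\<close>.\<close>

lemma power_card_minus_one_eq_one:
  fixes x :: "'a::{finite,field}"
  assumes "x \<noteq> 0"
  shows "x ^ (CARD('a) - 1) = 1"
proof -
  have "(\<Prod>y\<in>UNIV-{0}. x * y) = x ^ (CARD('a) - 1) * \<Prod>(UNIV-{0})"
    by (simp add: prod.distrib mult_ac)
  also have "(\<Prod>y\<in>UNIV-{0}. x * y) = (\<Prod>y\<in>UNIV-{0}. y)"
    by (rule prod.reindex_bij_witness[of _ "\<lambda>y. y / x" "\<lambda>y. x * y"]) (use assms in auto)
  finally have "1 * \<Prod>(UNIV-{0::'a}) = x ^ (CARD('a) - 1) * \<Prod>(UNIV-{0})"
    by simp
  moreover have "\<Prod>(UNIV-{0::'a}) \<noteq> 0"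
    by simp
  ultimately show ?thesis
    by (metis mult_right_cancel)
qed

lemma ex_power_neq_one:
  assumes "0 < e" "e < CARD('a::{finite,field}) - 1"
  shows "\<exists>x::'a. x \<noteq> 0 \<and> x ^ e \<noteq> 1"
proof (rule ccontr)
  assume all_one: "\<not> (\<exists>x::'a. x \<noteq> 0 \<and> x ^ e \<noteq> 1)"
  let ?P = "monom (1::'a) e - 1"
  have "UNIV - {0::'a} \<subseteq> {x. poly ?P x = 0}"
    using all_one by (auto simp: poly_monom)
  then have "CARD('a) - 1 \<le> card {x. poly ?P x = 0}"
    using card_mono[of "{x. poly ?P x = 0}" "UNIV - {0::'a}"] by simp
  also have "\<dots> \<le> degree ?P"
  proof (rule card_poly_roots_bound)
    have "poly ?P 0 \<noteq> 0"
      using assms(1) by (simp add: poly_monom power_0_left)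
    then show "?P \<noteq> 0"
      by auto
  qed
  also have "\<dots> \<le> e"
    by (auto intro: degree_diff_le simp: degree_monom_le)
  finally show False
    using assms(2) by simp
qed

lemma CHAR_eq_prime_if_card_eq_power:
  assumes "prime p" "CARD('a::{finite,field}) = p ^ N"
  shows "CHAR('a) = p"
proof -
  have "prime CHAR('a)"
    by (intro prime_CHAR_semidom finite_imp_CHAR_pos) simp
  moreover have "CHAR('a) dvd p ^ N"
    using CHAR_dvd_CARD[where 'a='a] assms(2) by simp
  ultimately show ?thesis
    using assms(1) prime_dvd_power primes_dvd_imp_eq by blast
qed

lemma diff_power_CHAR_power:
  fixes x y :: "'a::comm_ring_1"
  assumes "prime CHAR('a)"
  shows "(x - y) ^ (CHAR('a) ^ m) = x ^ (CHAR('a) ^ m) - y ^ (CHAR('a) ^ m)"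
proof -
  have "x ^ (CHAR('a) ^ m) = ((x - y) + y) ^ (CHAR('a) ^ m)"
    by simp
  also have "\<dots> = (x - y) ^ (CHAR('a) ^ m) + y ^ (CHAR('a) ^ m)"
    using assms by (rule freshmans_dream') simp
  finally show ?thesis
    by (simp add: algebra_simps)
qed

lemma sub_one_dvd_power_sub_one:
  fixes x :: nat
  shows "x - 1 dvd x ^ j - 1"
proof (cases "x = 0")
  case True
  then show ?thesis by (cases j) auto
next
  case False
  then have "[x = 1] (mod x - 1)"
    by (metis cong_def mod_add_self2 le_add_diff_inverse less_one not_le)
  then have "[x ^ j = 1 ^ j] (mod x - 1)"
    by (rule cong_pow)
  then show ?thesis
    using cong_to_1_nat by simp
qed

lemma two_mult_sub_one_dvd_power_even:
  fixes q n :: nat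
  assumes "odd q" "even n"
  shows "2 * (q - 1) dvd q ^ n - 1"
proof -
  obtain j where "n = 2 * j"
    using assms(2) by blast
  then have square_dvd: "q\<^sup>2 - 1 dvd q ^ n - 1"
    using sub_one_dvd_power_sub_one[of "q\<^sup>2" j] by (simp add: power_mult)
  obtain r where r: "q + 1 = 2 * r"
    using assms(1) by (metis odd_even_add odd_one evenE)
  have "q\<^sup>2 - 1 = (q - 1) * (q + 1)"
    by (cases q) (simp_all add: power2_eq_square algebra_simps)
  also have "\<dots> = 2 * (q - 1) * r"
    by (simp only: r mult_ac)
  finally have "2 * (q - 1) dvd q\<^sup>2 - 1"
    by simp
  then show ?thesis
    using square_dvd by (rule dvd_trans)
qed

lemma power_eq_self_if_power_eq_one:
  fixes x :: "'a::monoid_mult"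
  assumes "x ^ k = 1" "k dvd q - 1" "0 < q"
  shows "x ^ q = x"
proof -
  obtain t where "q - 1 = k * t"
    using assms(2) by blast
  then have "x ^ (q - 1) = 1"
    using assms(1) by (simp add: power_mult)
  then show ?thesis
    using assms(3) by (cases q) simp_all
qed

lemma power_eq_one_if_power_eq_self:
  fixes x :: "'a::idom"
  assumes "x \<noteq> 0" "x ^ q = x" "q - 1 dvd e"
  shows "x ^ e = 1"
proof -
  have "x ^ (q - 1) = 1"
  proof (cases q)
    case Suc
    then have "x * x ^ (q - 1) = x * 1"
      using assms(2) by simp
    then show ?thesis
      using assms(1) by simp
  qed simp
  then show ?thesis
    using assms(3) by (auto simp: power_mult)
qed

lemma square_power_half_card_eq_one:
  fixes s :: "'a::{finite,field}"
  assumes "odd CARD('a)" "s \<noteq> 0"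
  shows "(s\<^sup>2) ^ ((CARD('a) - 1) div 2) = 1"
  using power_card_minus_one_eq_one[OF assms(2)] assms(1)
  by (simp add: power_mult[symmetric])

lemma diff_power_half_card_eq_one:
  fixes x y :: "'a::{finite,field}"
  assumes "prime p" "odd p" "even n" "k dvd p ^ m - 1" "CARD('a) = (p ^ m) ^ n"
    and "x ^ k = 1" "y ^ k = 1" "x \<noteq> y"
  shows "(x - y) ^ ((CARD('a) - 1) div 2) = 1"
proof -
  have "CHAR('a) = p"
    using CHAR_eq_prime_if_card_eq_power[of p "m * n"] assms(1,5) by (simp add: power_mult)
  moreover have "0 < p ^ m"
    using assms(1) prime_gt_0_nat by simp
  then have "x ^ (p ^ m) = x" "y ^ (p ^ m) = y"
    using power_eq_self_if_power_eq_one assms(4,6,7) by blast+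
  ultimately have "(x - y) ^ (p ^ m) = x - y"
    using diff_power_CHAR_power[of x y m] assms(1) by simp
  moreover obtain t where "CARD('a) - 1 = 2 * (p ^ m - 1) * t"
    using two_mult_sub_one_dvd_power_even[of "p ^ m" n] assms(2,3,5) by auto
  then have "p ^ m - 1 dvd (CARD('a) - 1) div 2"
    by simp
  ultimately show ?thesis
    using power_eq_one_if_power_eq_self[of "x - y" "p ^ m"] assms(8) by simp
qed

lemma lft_preimages_relation:
  fixes a b c d x\<^sub>1 x\<^sub>2 x\<^sub>3 \<nu> :: "'a::field"
  assumes "a * d - b * c \<noteq> 0"
    and "lft a b c d (Some x\<^sub>1) = None" "lft a b c d (Some x\<^sub>2) = Some 0"
    and "lft a b c d (Some x\<^sub>3) = Some \<nu>"
  shows "c \<noteq> 0" "\<nu> * c\<^sup>2 * (x\<^sub>2 - x\<^sub>1) * (x\<^sub>3 - x\<^sub>1) = (a * d - b * c) * (x\<^sub>3 - x\<^sub>2)"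
proof -
  have "c * x\<^sub>1 + d = 0"
    using assms(2) by (auto simp: lft_def split: if_splits)
  then have d: "d = - c * x\<^sub>1"
    by (simp add: algebra_simps eq_neg_iff_add_eq_0)
  have "a * x\<^sub>2 + b = 0"
    using assms(3) by (auto simp: lft_def split: if_splits)
  then have b: "b = - a * x\<^sub>2"
    by (simp add: algebra_simps eq_neg_iff_add_eq_0)
  have det: "a * d - b * c = a * c * (x\<^sub>2 - x\<^sub>1)"
    by (simp add: d b algebra_simps)
  show "c \<noteq> 0"
    using assms(1) det by auto
  have "\<nu> = a * (x\<^sub>3 - x\<^sub>2) / (c * (x\<^sub>3 - x\<^sub>1))"
    using assms(4) by (auto simp: lft_def d b algebra_simps split: if_splits)
  moreover have "x\<^sub>3 \<noteq> x\<^sub>1"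
    using assms(2,4) by auto
  ultimately have \<nu>: "\<nu> * (c * (x\<^sub>3 - x\<^sub>1)) = a * (x\<^sub>3 - x\<^sub>2)"
    using \<open>c \<noteq> 0\<close> by simp
  have "\<nu> * c\<^sup>2 * (x\<^sub>2 - x\<^sub>1) * (x\<^sub>3 - x\<^sub>1) = \<nu> * (c * (x\<^sub>3 - x\<^sub>1)) * (c * (x\<^sub>2 - x\<^sub>1))"
    by (simp add: power2_eq_square algebra_simps)
  also have "\<dots> = (a * d - b * c) * (x\<^sub>3 - x\<^sub>2)"
    unfolding \<nu> det by (simp add: algebra_simps)
  finally show "\<nu> * c\<^sup>2 * (x\<^sub>2 - x\<^sub>1) * (x\<^sub>3 - x\<^sub>1) = (a * d - b * c) * (x\<^sub>3 - x\<^sub>2)" .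
qed

lemma power_eq_one_if_block_contains_inf_zero:
  fixes \<nu> :: "'a::field"
  assumes "B \<in> design_blocks k" "{None, Some 0, Some \<nu>} \<subseteq> B" "\<nu> \<noteq> 0"
    and squares: "\<And>s::'a. s \<noteq> 0 \<Longrightarrow> (s\<^sup>2) ^ e = 1"
    and diffs: "\<And>x y::'a. x ^ k = 1 \<Longrightarrow> y ^ k = 1 \<Longrightarrow> x \<noteq> y \<Longrightarrow> (x - y) ^ e = 1"
  shows "\<nu> ^ e = 1"
proof -
  obtain a b c d s where s: "s \<noteq> 0" "a * d - b * c = s\<^sup>2"
    and B: "B = lft a b c d ` base_block k"
    using assms(1) unfolding design_blocks_def PSL2_def by blast
  have "None \<in> B" "Some 0 \<in> B" "Some \<nu> \<in> B"
    using assms(2) by simp_all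
  then obtain x\<^sub>1 x\<^sub>2 x\<^sub>3 where roots: "x\<^sub>1 ^ k = 1" "x\<^sub>2 ^ k = 1" "x\<^sub>3 ^ k = 1"
    and images: "lft a b c d (Some x\<^sub>1) = None" "lft a b c d (Some x\<^sub>2) = Some 0"
      "lft a b c d (Some x\<^sub>3) = Some \<nu>"
    unfolding B base_block_def by auto
  have distinct: "x\<^sub>2 \<noteq> x\<^sub>1" "x\<^sub>3 \<noteq> x\<^sub>1" "x\<^sub>3 \<noteq> x\<^sub>2"
    using images assms(3) by auto
  have "a * d - b * c \<noteq> 0"
    using s by simp
  note relation = lft_preimages_relation[OF this images]
  have "(\<nu> * c\<^sup>2 * (x\<^sub>2 - x\<^sub>1) * (x\<^sub>3 - x\<^sub>1)) ^ e = (s\<^sup>2 * (x\<^sub>3 - x\<^sub>2)) ^ e"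
    using relation(2) s(2) by simp
  then show ?thesis
    using squares[OF relation(1)] squares[OF s(1)] diffs roots distinct
    by (simp add: power_mult_distrib)
qed

theorem proposition3p5:
  fixes p m n k :: nat and F :: "'a::{finite,field} itself"
  assumes "prime p" and "odd p" and "m > 0"
    and "n > 0" and "even n"
    and "k dvd p ^ m - 1"
    and "card (UNIV :: 'a set) = (p ^ m) ^ n"
  shows "\<not> gives_3_design F k"
proof
  assume "gives_3_design F k"
  then obtain lam where "lam > 0" and count: "\<And>T :: 'a option set. card T = 3 \<Longrightarrow>
      card {B \<in> design_blocks k. T \<subseteq> B} = lam"
    unfolding gives_3_design_def by blast
  define e where "e = (CARD('a) - 1) div 2"
  have "3 \<le> p"
    using assms(1,2) prime_ge_2_nat[of p] by presburger
  also have "p \<le> CARD('a)"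
    using assms(3,4,7) prime_gt_0_nat[OF assms(1)] by (simp add: self_le_power power_mult[symmetric])
  finally obtain \<nu> :: 'a where "\<nu> \<noteq> 0" "\<nu> ^ e \<noteq> 1"
    using ex_power_neq_one[where 'a='a, of e] unfolding e_def by auto
  have "odd CARD('a)"
    using assms(2,7) by simp
  then have squares: "\<And>s::'a. s \<noteq> 0 \<Longrightarrow> (s\<^sup>2) ^ e = 1"
    using square_power_half_card_eq_one unfolding e_def by blast
  have diffs: "\<And>x y::'a. x ^ k = 1 \<Longrightarrow> y ^ k = 1 \<Longrightarrow> x \<noteq> y \<Longrightarrow> (x - y) ^ e = 1"
    using diff_power_half_card_eq_one[OF assms(1,2,5,6,7)] unfolding e_def by blast
  have "{B \<in> design_blocks k. {None, Some 0, Some \<nu>} \<subseteq> B} = {}"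
    using power_eq_one_if_block_contains_inf_zero[OF _ _ \<open>\<nu> \<noteq> 0\<close> squares diffs] \<open>\<nu> ^ e \<noteq> 1\<close>
    by blast
  moreover have "card {None, Some 0, Some \<nu>} = 3"
    using \<open>\<nu> \<noteq> 0\<close> by simp
  ultimately show False
    using count \<open>lam > 0\<close> by (metis card.empty less_irrefl)
qed

end
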